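(* Let $(E,\pi,M)$ be a bundle with a connection $\Delta^h$, let $V\subseteq E$ be open, let $\{e_I\}$ be a frame of $T(E)$ over $V$ with $\{e_a\}$ a basis of $\Delta^v$, let $\{X_I\}$ be the frame adapted to $\{e_I\}$ and $\Gamma_\mu^a$ the coefficients of $\Delta^h$ in $\{X_I\}$, and let $U\subseteq V$. Consider frames $\tilde e_\mu=A_\mu^\nu e_\nu+A_\mu^b e_b$, $\tilde e_a=A_a^b e_b$ over $V$, where $[A_\mu^\nu]$, $[A_a^b]$ are non-degenerate matrix-valued functions on $V$ constant on the fibres of $\pi$ and $A_\mu^b\colon V\to\mathbb{K}$. Then all frames $\{\tilde X_I\}$ normal on $U$ for $\Delta^h$ (adapted to such frames $\{\tilde e_I\}$) are adapted to frames $\{\tilde e_I\}$ given on $U$ by $$\tilde e_\mu|_U=\big(A_\mu^\nu(e_\nu+\Gamma_\nu^b e_b)\big)|_U,\qquad \tilde e_a|_U=(A_a^b e_b)|_U,$$ with $[A_\mu^\nu]$, $[A_a^b]$ non-degenerate matrix-valued functions on $V$ constant on the fibres. Moreover, the frame $\{\tilde X_I\}$ adapted on $V$ to such a $\{\tilde e_I\}$ satisfies $$\tilde X_\mu|_U=(A_\mu^\nu X_\nu)|_U=\tilde e_\mu|_U,\qquad \tilde X_a|_U=(A_a^b X_b)|_U=\tilde e_a|_U .$$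
   Context: $(E,\pi,M)$: bundle with $E,M$ differentiable manifolds over $\mathbb{K}=\mathbb{R}$ or $\mathbb{C}$, $\dim M=n$, fibre dimension $r$. Indices $\mu,\nu$ run over $1,\dots,n$, $a,b$ over $n+1,\dots,n+r$, $I$ over $1,\dots,n+r$; summation convention. Vertical distribution: $\Delta^v_p=T_p(\pi^{-1}(\pi(p)))$. A connection is an $n$-dimensional distribution $\Delta^h$ on $E$ with $\Delta^v_p\oplus\Delta^h_p=T_p(E)$. For a local frame $\{e_I\}$ of $T(E)$ with $\{e_a\}$ a basis of $\Delta^v$, the adapted frame is $\{X_I\}$ with $X_\mu=(\pi_*|_{\Delta^h})^{-1}\pi_*(e_\mu)$, $X_a=e_a$; then $X_\mu=e_\mu+\Gamma_\mu^b e_b$ for unique functions $\Gamma_\mu^a$ (the 2-index coefficients of $\Delta^h$ in $\{X_I\}$). A frame $\{X_I\}$ adapted to a frame $\{e_I\}$ defined over an open set $V\supseteq U$ is normal for $\Delta^h$ on $U$ if all its coefficients $\Gamma_\mu^a$ vanish on $U$. *)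

theory Defs
  imports "HOL-Analysis.Analysis"
begin

text \<open>Pointwise (fibrewise linear-algebraic) model of a bundle with connection.
  Scalars: a field 'k (covers K = real or complex).  Tangent vectors of E live in an
  ambient type 'w, the tangent space at p is the subspace T p.  Tangent vectors of M
  live in 'u.  pistar p is the differential of pi at p; its kernel on T p is the
  vertical space Dv p = T_p(pi^-1(pi p)).
  Indices: mu, nu in {1..n}; a, b in {n+1..n+r}; I in {1..n+r}.\<close>

definition bundle_connection ::
  "('k::field \<Rightarrow> 'w::ab_group_add \<Rightarrow> 'w) \<Rightarrow> ('k \<Rightarrow> 'u::ab_group_add \<Rightarrow> 'u) \<Rightarrow>
   ('e \<Rightarrow> 'm) \<Rightarrow> ('e \<Rightarrow> 'w \<Rightarrow> 'u) \<Rightarrow> ('e \<Rightarrow> 'w set) \<Rightarrow> ('m \<Rightarrow> 'u set) \<Rightarrow>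
   ('e \<Rightarrow> 'w set) \<Rightarrow> ('e \<Rightarrow> 'w set) \<Rightarrow> nat \<Rightarrow> nat \<Rightarrow> bool" where
  "bundle_connection sc scM \<pi> pistar T TM Dv Dh n r \<longleftrightarrow>
     vector_space sc \<and> vector_space scM \<and>
     (\<forall>p. module.subspace sc (T p) \<and> vector_space.dim sc (T p) = n + r \<and>
          module.subspace scM (TM (\<pi> p)) \<and> vector_space.dim scM (TM (\<pi> p)) = n \<and>
          Vector_Spaces.linear sc scM (pistar p) \<and> pistar p ` T p = TM (\<pi> p) \<and>
          Dv p = {v \<in> T p. pistar p v = 0} \<and>
          module.subspace sc (Dh p) \<and> Dh p \<subseteq> T p \<and> vector_space.dim sc (Dh p) = n \<and>
          Dv p \<inter> Dh p = {0} \<and> {x + y | x y. x \<in> Dv p \<and> y \<in> Dh p} = T p)"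

definition vertical_frame_on ::
  "('k::field \<Rightarrow> 'w::ab_group_add \<Rightarrow> 'w) \<Rightarrow> ('e \<Rightarrow> 'w set) \<Rightarrow> ('e \<Rightarrow> 'w set) \<Rightarrow>
   nat \<Rightarrow> nat \<Rightarrow> 'e set \<Rightarrow> (nat \<Rightarrow> 'e \<Rightarrow> 'w) \<Rightarrow> bool" where
  "vertical_frame_on sc T Dv n r V e \<longleftrightarrow>
     (\<forall>p\<in>V. inj_on (\<lambda>I. e I p) {1..n+r} \<and>
            \<not> module.dependent sc ((\<lambda>I. e I p) ` {1..n+r}) \<and>
            module.span sc ((\<lambda>I. e I p) ` {1..n+r}) = T p \<and>
            module.span sc ((\<lambda>a. e a p) ` {n+1..n+r}) = Dv p)"

definition adapted_frame ::
  "('e \<Rightarrow> 'w \<Rightarrow> 'u) \<Rightarrow> ('e \<Rightarrow> 'w set) \<Rightarrow> nat \<Rightarrow> (nat \<Rightarrow> 'e \<Rightarrow> 'w) \<Rightarrow> nat \<Rightarrow> 'e \<Rightarrow> 'w" where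
  "adapted_frame pistar Dh n e I p =
     (if I \<in> {1..n} then (THE h. h \<in> Dh p \<and> pistar p h = pistar p (e I p)) else e I p)"

definition conn_coeff ::
  "('k::field \<Rightarrow> 'w::ab_group_add \<Rightarrow> 'w) \<Rightarrow> ('e \<Rightarrow> 'w \<Rightarrow> 'u) \<Rightarrow> ('e \<Rightarrow> 'w set) \<Rightarrow>
   nat \<Rightarrow> nat \<Rightarrow> (nat \<Rightarrow> 'e \<Rightarrow> 'w) \<Rightarrow> nat \<Rightarrow> 'e \<Rightarrow> nat \<Rightarrow> 'k" where
  "conn_coeff sc pistar Dh n r e \<mu> p =
     (THE g. (\<forall>b. b \<notin> {n+1..n+r} \<longrightarrow> g b = 0) \<and>
             adapted_frame pistar Dh n e \<mu> p = e \<mu> p + (\<Sum>b\<in>{n+1..n+r}. sc (g b) (e b p)))"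

definition normal_on ::
  "('k::field \<Rightarrow> 'w::ab_group_add \<Rightarrow> 'w) \<Rightarrow> ('e \<Rightarrow> 'w \<Rightarrow> 'u) \<Rightarrow> ('e \<Rightarrow> 'w set) \<Rightarrow>
   nat \<Rightarrow> nat \<Rightarrow> 'e set \<Rightarrow> (nat \<Rightarrow> 'e \<Rightarrow> 'w) \<Rightarrow> bool" where
  "normal_on sc pistar Dh n r U e \<longleftrightarrow>
     (\<forall>p\<in>U. \<forall>\<mu>\<in>{1..n}. \<forall>b\<in>{n+1..n+r}. conn_coeff sc pistar Dh n r e \<mu> p b = 0)"

definition nondegenerate :: "nat set \<Rightarrow> (nat \<Rightarrow> nat \<Rightarrow> 'k::field) \<Rightarrow> bool" where
  "nondegenerate S A \<longleftrightarrow>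
     (\<exists>B. (\<forall>i\<in>S. \<forall>j\<in>S. (\<Sum>l\<in>S. A i l * B l j) = (if i = j then 1 else 0)) \<and>
          (\<forall>i\<in>S. \<forall>j\<in>S. (\<Sum>l\<in>S. B i l * A l j) = (if i = j then 1 else 0)))"

definition fibre_constant_on :: "('e \<Rightarrow> 'm) \<Rightarrow> 'e set \<Rightarrow> ('e \<Rightarrow> 'x) \<Rightarrow> bool" where
  "fibre_constant_on \<pi> V f \<longleftrightarrow> (\<forall>p\<in>V. \<forall>q\<in>V. \<pi> p = \<pi> q \<longrightarrow> f p = f q)"

definition new_frame ::
  "('k::field \<Rightarrow> 'w::ab_group_add \<Rightarrow> 'w) \<Rightarrow> nat \<Rightarrow> nat \<Rightarrow>
   ('e \<Rightarrow> nat \<Rightarrow> nat \<Rightarrow> 'k) \<Rightarrow> ('e \<Rightarrow> nat \<Rightarrow> nat \<Rightarrow> 'k) \<Rightarrow> ('e \<Rightarrow> nat \<Rightarrow> nat \<Rightarrow> 'k) \<Rightarrow>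
   (nat \<Rightarrow> 'e \<Rightarrow> 'w) \<Rightarrow> nat \<Rightarrow> 'e \<Rightarrow> 'w" where
  "new_frame sc n r Am Amb Aab e I p =
     (if I \<in> {1..n}
      then (\<Sum>\<nu>\<in>{1..n}. sc (Am p I \<nu>) (e \<nu> p)) + (\<Sum>b\<in>{n+1..n+r}. sc (Amb p I b) (e b p))
      else (\<Sum>b\<in>{n+1..n+r}. sc (Aab p I b) (e b p)))"

end

theory Submission
  imports Defs
begin

(* At a point p, pi_* restricted to Dh p is injective with the same image as on T p, so the
   horizontal lift h (h w is the unique horizontal vector with pi_* (h w) = pi_* w) is linear on
   T p and kills vertical vectors.  Since X_mu = h e_mu, every frame of the given form has
   X~_mu = A_mu^nu X_nu, whatever A_mu^b is.  As [A_a^b] is invertible, the e~_a are again a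
   basis of the vertical space, so X~_mu = e~_mu + Gamma~_mu^b e~_b with unique coefficients,
   and the frame is normal exactly when X~_mu = e~_mu, i.e. e~_mu = A_mu^nu (e_nu + Gamma_nu^b e_b). *)

definition horizontal_lift :: "('w \<Rightarrow> 'u) \<Rightarrow> 'w set \<Rightarrow> 'w \<Rightarrow> 'w" where
  "horizontal_lift P H w = (THE h. h \<in> H \<and> P h = P w)"

context vector_space
begin

lemma independent_image_family:
  assumes "finite S" "inj_on f S" "independent (f ` S)" "(\<Sum>i\<in>S. scale (c i) (f i)) = 0"
  shows "\<forall>i\<in>S. c i = 0"
proof
  fix i assume "i \<in> S"
  define u where "u v = c (the_inv_into S f v)" for v
  have "(\<Sum>v\<in>f ` S. scale (u v) v) = (\<Sum>i\<in>S. scale (c i) (f i))"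
    using assms(2) by (simp add: sum.reindex u_def the_inv_into_f_f)
  then have "\<forall>v\<in>f ` S. u v = 0"
    using assms(1,3,4) dependent_finite[of "f ` S"] by auto
  then show "c i = 0"
    using assms(2) \<open>i \<in> S\<close> by (auto simp: u_def the_inv_into_f_f)
qed

lemma span_image_family:
  assumes "v \<in> span (f ` S)" "finite S"
  shows "\<exists>c. v = (\<Sum>i\<in>S. scale (c i) (f i))"
  using assms(1)
proof (induction rule: span_induct_alt)
  case base
  show ?case by (intro exI[of _ "\<lambda>_. 0"]) simp
next
  case (step a x y)
  then obtain j c where "j \<in> S" "x = f j" "y = (\<Sum>i\<in>S. scale (c i) (f i))" by auto
  then have "scale a x + y = (\<Sum>i\<in>S. scale (c i + (if i = j then a else 0)) (f i))"
    using assms(2)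
    by (simp add: scale_left_distrib sum.distrib if_distrib[of "\<lambda>t. scale t _"] cong: if_cong)
  then show ?case by (rule exI[of _ "\<lambda>i. c i + (if i = j then a else 0)"])
qed

lemma unique_coefficients:
  assumes "finite S"
    and indep: "\<And>c. (\<Sum>i\<in>S. scale (c i) (f i)) = 0 \<Longrightarrow> \<forall>i\<in>S. c i = 0"
    and "v \<in> span (f ` S)"
  shows "\<exists>!c. (\<forall>i. i \<notin> S \<longrightarrow> c i = 0) \<and> v = (\<Sum>i\<in>S. scale (c i) (f i))"
proof -
  obtain c where c: "v = (\<Sum>i\<in>S. scale (c i) (f i))"
    using span_image_family assms(1,3) by blast
  show ?thesis
  proof (rule ex1I[of _ "\<lambda>i. if i \<in> S then c i else 0"])
    fix d assume d: "(\<forall>i. i \<notin> S \<longrightarrow> d i = 0) \<and> v = (\<Sum>i\<in>S. scale (d i) (f i))"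
    then have "(\<Sum>i\<in>S. scale (d i - c i) (f i)) = 0"
      using c by (simp add: scale_left_diff_distrib sum_subtractf)
    then have "\<forall>i\<in>S. d i - c i = 0" by (rule indep)
    with d show "d = (\<lambda>i. if i \<in> S then c i else 0)" by auto
  qed (use c in simp)
qed

lemma sum_scale_sum_swap:
  "(\<Sum>i\<in>S. scale (a i) (\<Sum>j\<in>R. scale (b i j) (f j))) = (\<Sum>j\<in>R. scale (\<Sum>i\<in>S. a i * b i j) (f j))"
  by (simp add: scale_sum_right scale_sum_left sum.swap[of _ S R])

lemma independent_family_transform:
  assumes "finite S" "nondegenerate S A"
    and indep: "\<And>c. (\<Sum>i\<in>S. scale (c i) (f i)) = 0 \<Longrightarrow> \<forall>i\<in>S. c i = 0"
    and "(\<Sum>i\<in>S. scale (c i) (\<Sum>j\<in>S. scale (A i j) (f j))) = 0"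
  shows "\<forall>i\<in>S. c i = 0"
proof
  obtain B where AB: "\<forall>i\<in>S. \<forall>j\<in>S. (\<Sum>l\<in>S. A i l * B l j) = (if i = j then 1 else 0)"
    using assms(2) unfolding nondegenerate_def by blast
  have "(\<Sum>j\<in>S. scale (\<Sum>i\<in>S. c i * A i j) (f j)) = 0"
    using assms(4) by (simp add: sum_scale_sum_swap)
  then have cA: "\<forall>j\<in>S. (\<Sum>i\<in>S. c i * A i j) = 0" by (rule indep)
  fix k assume "k \<in> S"
  have "c k = (\<Sum>i\<in>S. c i * (if i = k then 1 else 0))"
    using \<open>k \<in> S\<close> assms(1) by (simp add: if_distrib cong: if_cong)
  also have "\<dots> = (\<Sum>i\<in>S. c i * (\<Sum>l\<in>S. A i l * B l k))"
    using AB \<open>k \<in> S\<close> by (intro sum.cong) auto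
  also have "\<dots> = (\<Sum>l\<in>S. (\<Sum>i\<in>S. c i * A i l) * B l k)"
    by (simp only: sum_distrib_left sum_distrib_right mult.assoc) (rule sum.swap)
  also have "\<dots> = 0" using cA by simp
  finally show "c k = 0" .
qed

lemma span_family_transform:
  assumes "finite S" "nondegenerate S A"
  shows "span ((\<lambda>i. \<Sum>j\<in>S. scale (A i j) (f j)) ` S) = span (f ` S)"
    (is "span (?g ` S) = _")
proof -
  obtain B where BA: "\<forall>i\<in>S. \<forall>j\<in>S. (\<Sum>l\<in>S. B i l * A l j) = (if i = j then 1 else 0)"
    using assms(2) unfolding nondegenerate_def by blast
  have "f k \<in> span (?g ` S)" if "k \<in> S" for k
  proof -
    have "f k = (\<Sum>j\<in>S. scale (if k = j then 1 else 0) (f j))"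
      using that assms(1) by (simp add: if_distrib[of "\<lambda>t. scale t _"] cong: if_cong)
    also have "\<dots> = (\<Sum>i\<in>S. scale (B k i) (?g i))"
      unfolding sum_scale_sum_swap using BA that by (intro sum.cong) auto
    also have "\<dots> \<in> span (?g ` S)"
      by (intro span_sum span_scale span_base imageI)
    finally show ?thesis .
  qed
  moreover have "?g ` S \<subseteq> span (f ` S)"
    by (auto intro!: span_sum span_scale intro: span_base)
  ultimately show ?thesis by (auto simp: span_eq)
qed

end

locale horizontal_splitting = Vector_Spaces.linear sc scM P
  for sc :: "'k::field \<Rightarrow> 'w::ab_group_add \<Rightarrow> 'w" and scM :: "'k \<Rightarrow> 'u::ab_group_add \<Rightarrow> 'u"
    and P :: "'w \<Rightarrow> 'u" +
  fixes T Dv Dh :: "'w set"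
  assumes subspace_T: "vs1.subspace T"
    and Dv_eq: "Dv = {v \<in> T. P v = 0}"
    and subspace_Dh: "vs1.subspace Dh"
    and Dh_subset_T: "Dh \<subseteq> T"
    and Dv_inter_Dh: "Dv \<inter> Dh = {0}"
    and Dv_plus_Dh: "{x + y | x y. x \<in> Dv \<and> y \<in> Dh} = T"
begin

lemma horizontal_eqI:
  assumes "h \<in> Dh" "h' \<in> Dh" "P h = P h'"
  shows "h = h'"
proof -
  have "h - h' \<in> Dh" using subspace_Dh assms(1,2) by (rule vs1.subspace_diff)
  moreover have "P (h - h') = 0" using assms(3) by (simp add: diff)
  ultimately have "h - h' \<in> Dv \<inter> Dh" using Dh_subset_T by (auto simp: Dv_eq)
  then show ?thesis using Dv_inter_Dh by simp
qed

lemma ex1_horizontal: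
  assumes "w \<in> T"
  shows "\<exists>!h. h \<in> Dh \<and> P h = P w"
proof -
  have "w \<in> {x + y | x y. x \<in> Dv \<and> y \<in> Dh}"
    using assms Dv_plus_Dh by simp
  then obtain v h where "v \<in> Dv" "h \<in> Dh" "w = v + h" by blast
  then have "h \<in> Dh \<and> P h = P w" by (simp add: Dv_eq add)
  then show ?thesis by (auto intro: horizontal_eqI)
qed

lemma horizontal_lift_eqI:
  assumes "h \<in> Dh" "P h = P w"
  shows "horizontal_lift P Dh w = h"
  unfolding horizontal_lift_def
proof (rule the_equality)
  fix h' assume "h' \<in> Dh \<and> P h' = P w"
  with assms show "h' = h" by (intro horizontal_eqI) auto
qed (use assms in simp)

lemma horizontal_lift_in_Dh: "w \<in> T \<Longrightarrow> horizontal_lift P Dh w \<in> Dh"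
  and P_horizontal_lift: "w \<in> T \<Longrightarrow> P (horizontal_lift P Dh w) = P w"
  unfolding horizontal_lift_def using theI'[OF ex1_horizontal] by blast+

lemma horizontal_lift_diff_vertical:
  assumes "w \<in> T"
  shows "horizontal_lift P Dh w - w \<in> Dv"
  using assms vs1.subspace_diff[OF subspace_T] Dh_subset_T horizontal_lift_in_Dh
  by (auto simp: Dv_eq diff P_horizontal_lift)

lemma horizontal_lift_add_vertical:
  assumes "v \<in> Dv"
  shows "horizontal_lift P Dh (w + v) = horizontal_lift P Dh w"
  using assms by (simp add: horizontal_lift_def Dv_eq add)

lemma horizontal_lift_sum:
  assumes "finite S" "\<And>i. i \<in> S \<Longrightarrow> w i \<in> T"
  shows "horizontal_lift P Dh (\<Sum>i\<in>S. sc (c i) (w i)) = (\<Sum>i\<in>S. sc (c i) (horizontal_lift P Dh (w i)))"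
proof (rule horizontal_lift_eqI)
  show "(\<Sum>i\<in>S. sc (c i) (horizontal_lift P Dh (w i))) \<in> Dh"
    using assms(2) horizontal_lift_in_Dh
    by (intro vs1.subspace_sum[OF subspace_Dh] vs1.subspace_scale[OF subspace_Dh]) auto
  show "P (\<Sum>i\<in>S. sc (c i) (horizontal_lift P Dh (w i))) = P (\<Sum>i\<in>S. sc (c i) (w i))"
    using assms(2) by (simp add: sum scale P_horizontal_lift)
qed

end

lemma adapted_frame_horizontal_lift:
  "\<mu> \<in> {1..n} \<Longrightarrow> adapted_frame pistar Dh n f \<mu> p = horizontal_lift (pistar p) (Dh p) (f \<mu> p)"
  by (simp add: adapted_frame_def horizontal_lift_def)

lemma adapted_frame_vertical: "I \<notin> {1..n} \<Longrightarrow> adapted_frame pistar Dh n f I p = f I p"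
  by (auto simp: adapted_frame_def)

lemma new_frame_vertical:
  "a \<in> {n+1..n+r} \<Longrightarrow> new_frame sc n r Am Amb Aab e a p = (\<Sum>b\<in>{n+1..n+r}. sc (Aab p a b) (e b p))"
  by (simp add: new_frame_def)

locale connection_bundle =
  fixes sc :: "'k::field \<Rightarrow> 'w::ab_group_add \<Rightarrow> 'w" and scM :: "'k \<Rightarrow> 'u::ab_group_add \<Rightarrow> 'u"
    and \<pi> :: "'e \<Rightarrow> 'm" and pistar :: "'e \<Rightarrow> 'w \<Rightarrow> 'u"
    and T Dv Dh :: "'e \<Rightarrow> 'w set" and TM :: "'m \<Rightarrow> 'u set" and n r :: nat
  assumes connection: "bundle_connection sc scM \<pi> pistar T TM Dv Dh n r"
begin

lemma splitting: "horizontal_splitting sc scM (pistar p) (T p) (Dv p) (Dh p)"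
  using connection
  unfolding bundle_connection_def horizontal_splitting_def horizontal_splitting_axioms_def
  by (elim conjE allE[of _ p]) (intro conjI; assumption)

sublocale vs: vector_space sc
  using connection by (simp add: bundle_connection_def)

lemma adapted_frame_conn_coeff:
  assumes "\<mu> \<in> {1..n}" "f \<mu> p \<in> T p"
    and indep: "\<And>c. (\<Sum>b\<in>{n+1..n+r}. sc (c b) (f b p)) = 0 \<Longrightarrow> \<forall>b\<in>{n+1..n+r}. c b = 0"
    and "Dv p \<subseteq> vs.span ((\<lambda>b. f b p) ` {n+1..n+r})"
  shows "adapted_frame pistar Dh n f \<mu> p =
           f \<mu> p + (\<Sum>b\<in>{n+1..n+r}. sc (conn_coeff sc pistar Dh n r f \<mu> p b) (f b p))"
proof -
  interpret horizontal_splitting sc scM "pistar p" "T p" "Dv p" "Dh p" by (rule splitting)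
  let ?X = "adapted_frame pistar Dh n f \<mu> p"
  have "?X - f \<mu> p \<in> Dv p"
    using horizontal_lift_diff_vertical[OF assms(2)] assms(1)
    by (simp add: adapted_frame_horizontal_lift)
  then have "\<exists>!c. (\<forall>b. b \<notin> {n+1..n+r} \<longrightarrow> c b = 0) \<and>
      ?X - f \<mu> p = (\<Sum>b\<in>{n+1..n+r}. sc (c b) (f b p))"
    using assms(4) by (intro vs.unique_coefficients[OF finite_atLeastAtMost indep]) auto
  then have "\<exists>!c. (\<forall>b. b \<notin> {n+1..n+r} \<longrightarrow> c b = 0) \<and>
      ?X = f \<mu> p + (\<Sum>b\<in>{n+1..n+r}. sc (c b) (f b p))"
    by (simp add: diff_eq_eq add.commute)
  from theI'[OF this] show ?thesis unfolding conn_coeff_def by blast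
qed

end

locale framed_connection = connection_bundle +
  fixes V e
  assumes frame: "vertical_frame_on sc T Dv n r V e"
begin

lemma
  assumes "p \<in> V"
  shows frame_inj: "inj_on (\<lambda>I. e I p) {1..n+r}"
    and frame_independent: "vs.independent ((\<lambda>I. e I p) ` {1..n+r})"
    and span_frame: "vs.span ((\<lambda>I. e I p) ` {1..n+r}) = T p"
    and span_vertical_frame: "vs.span ((\<lambda>b. e b p) ` {n+1..n+r}) = Dv p"
  using frame assms by (simp_all add: vertical_frame_on_def)

lemma frame_in_T:
  assumes "p \<in> V" "I \<in> {1..n+r}"
  shows "e I p \<in> T p"
  using vs.span_base[of "e I p" "(\<lambda>I. e I p) ` {1..n+r}"] assms span_frame by auto

lemma vertical_frame_independent:
  assumes "p \<in> V" "(\<Sum>b\<in>{n+1..n+r}. sc (c b) (e b p)) = 0"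
  shows "\<forall>b\<in>{n+1..n+r}. c b = 0"
proof (rule vs.independent_image_family[OF _ _ _ assms(2)])
  show "inj_on (\<lambda>b. e b p) {n+1..n+r}"
    using frame_inj[OF assms(1)] by (rule inj_on_subset) auto
  show "vs.independent ((\<lambda>b. e b p) ` {n+1..n+r})"
    using frame_independent[OF assms(1)] by (rule vs.independent_mono) auto
qed simp

lemma adapted_frame_expansion:
  assumes "p \<in> V" "\<nu> \<in> {1..n}"
  shows "adapted_frame pistar Dh n e \<nu> p =
           e \<nu> p + (\<Sum>b\<in>{n+1..n+r}. sc (conn_coeff sc pistar Dh n r e \<nu> p b) (e b p))"
  using assms span_vertical_frame[OF assms(1)]
  by (intro adapted_frame_conn_coeff frame_in_T vertical_frame_independent) auto

lemma new_frame_in_T: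
  assumes "p \<in> V" "\<mu> \<in> {1..n}"
  shows "new_frame sc n r Am Amb Aab e \<mu> p \<in> T p"
proof -
  interpret horizontal_splitting sc scM "pistar p" "T p" "Dv p" "Dh p" by (rule splitting)
  show ?thesis
    using assms frame_in_T
    by (auto simp: new_frame_def intro!: vs.subspace_add[OF subspace_T]
        vs.subspace_sum[OF subspace_T] vs.subspace_scale[OF subspace_T])
qed

lemma new_frame_vertical_independent:
  assumes "p \<in> V" "nondegenerate {n+1..n+r} (Aab p)"
    and "(\<Sum>b\<in>{n+1..n+r}. sc (c b) (new_frame sc n r Am Amb Aab e b p)) = 0"
  shows "\<forall>b\<in>{n+1..n+r}. c b = 0"
proof (rule vs.independent_family_transform[OF finite_atLeastAtMost assms(2)])
  show "(\<Sum>b\<in>{n+1..n+r}. sc (c b) (\<Sum>j\<in>{n+1..n+r}. sc (Aab p b j) (e j p))) = 0"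
    using assms(3) by (simp add: new_frame_vertical)
qed (rule vertical_frame_independent[OF assms(1)])

lemma span_new_frame_vertical:
  assumes "p \<in> V" "nondegenerate {n+1..n+r} (Aab p)"
  shows "vs.span ((\<lambda>b. new_frame sc n r Am Amb Aab e b p) ` {n+1..n+r}) = Dv p"
proof -
  have "vs.span ((\<lambda>b. new_frame sc n r Am Amb Aab e b p) ` {n+1..n+r}) =
      vs.span ((\<lambda>a. \<Sum>b\<in>{n+1..n+r}. sc (Aab p a b) (e b p)) ` {n+1..n+r})"
    by (rule arg_cong[where f = vs.span], rule image_cong[OF refl new_frame_vertical])
  also have "\<dots> = vs.span ((\<lambda>b. e b p) ` {n+1..n+r})"
    by (rule vs.span_family_transform[OF finite_atLeastAtMost assms(2)])
  also have "\<dots> = Dv p"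
    by (rule span_vertical_frame[OF assms(1)])
  finally show ?thesis .
qed

lemma adapted_new_frame_expansion:
  assumes "p \<in> V" "\<mu> \<in> {1..n}" "nondegenerate {n+1..n+r} (Aab p)"
  shows "adapted_frame pistar Dh n (new_frame sc n r Am Amb Aab e) \<mu> p =
           new_frame sc n r Am Amb Aab e \<mu> p +
           (\<Sum>b\<in>{n+1..n+r}. sc (conn_coeff sc pistar Dh n r (new_frame sc n r Am Amb Aab e) \<mu> p b)
                                (new_frame sc n r Am Amb Aab e b p))"
  using assms new_frame_vertical_independent span_new_frame_vertical
  by (intro adapted_frame_conn_coeff new_frame_in_T) auto

lemma adapted_new_frame:
  assumes "p \<in> V" "\<mu> \<in> {1..n}"
  shows "adapted_frame pistar Dh n (new_frame sc n r Am Amb Aab e) \<mu> p =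
           (\<Sum>\<nu>\<in>{1..n}. sc (Am p \<mu> \<nu>) (adapted_frame pistar Dh n e \<nu> p))"
proof -
  interpret horizontal_splitting sc scM "pistar p" "T p" "Dv p" "Dh p" by (rule splitting)
  have "(\<Sum>b\<in>{n+1..n+r}. sc (Amb p \<mu> b) (e b p)) \<in> Dv p"
    unfolding span_vertical_frame[OF assms(1), symmetric]
    by (intro vs.span_sum vs.span_scale vs.span_base imageI)
  then have "adapted_frame pistar Dh n (new_frame sc n r Am Amb Aab e) \<mu> p =
      horizontal_lift (pistar p) (Dh p) (\<Sum>\<nu>\<in>{1..n}. sc (Am p \<mu> \<nu>) (e \<nu> p))"
    using assms(2)
    by (simp add: adapted_frame_horizontal_lift new_frame_def horizontal_lift_add_vertical)
  also have "\<dots> = (\<Sum>\<nu>\<in>{1..n}. sc (Am p \<mu> \<nu>) (horizontal_lift (pistar p) (Dh p) (e \<nu> p)))"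
    using assms(1) frame_in_T by (intro horizontal_lift_sum) auto
  finally show ?thesis by (simp add: adapted_frame_horizontal_lift)
qed

lemma normal_new_frame:
  assumes "p \<in> V" "\<mu> \<in> {1..n}" "nondegenerate {n+1..n+r} (Aab p)"
    and "\<forall>b\<in>{n+1..n+r}. conn_coeff sc pistar Dh n r (new_frame sc n r Am Amb Aab e) \<mu> p b = 0"
  shows "new_frame sc n r Am Amb Aab e \<mu> p =
           (\<Sum>\<nu>\<in>{1..n}. sc (Am p \<mu> \<nu>) (adapted_frame pistar Dh n e \<nu> p))"
  using adapted_new_frame_expansion[where Am = Am and Amb = Amb and Aab = Aab, OF assms(1-3)]
    adapted_new_frame[where Am = Am and Amb = Amb and Aab = Aab, OF assms(1,2)] assms(4)
  by simp

end

theorem proposition4p1: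
  fixes sc :: "'k::field \<Rightarrow> 'w::ab_group_add \<Rightarrow> 'w"
    and scM :: "'k \<Rightarrow> 'u::ab_group_add \<Rightarrow> 'u"
    and \<pi> :: "'e::topological_space \<Rightarrow> 'm"
    and pistar :: "'e \<Rightarrow> 'w \<Rightarrow> 'u"
    and T Dv Dh :: "'e \<Rightarrow> 'w set" and TM :: "'m \<Rightarrow> 'u set"
    and n r :: nat and V U :: "'e set" and e :: "nat \<Rightarrow> 'e \<Rightarrow> 'w"
  assumes conn: "bundle_connection sc scM \<pi> pistar T TM Dv Dh n r"
    and V_open: "open V"
    and frame: "vertical_frame_on sc T Dv n r V e"
    and UV: "U \<subseteq> V"
  shows
   "(\<forall>Am Amb Aab.
       (\<forall>p\<in>V. nondegenerate {1..n} (Am p) \<and> nondegenerate {n+1..n+r} (Aab p)) \<and>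
       fibre_constant_on \<pi> V Am \<and> fibre_constant_on \<pi> V Aab \<and>
       normal_on sc pistar Dh n r U (new_frame sc n r Am Amb Aab e) \<longrightarrow>
       (\<forall>p\<in>U.
          (\<forall>\<mu>\<in>{1..n}. new_frame sc n r Am Amb Aab e \<mu> p =
              (\<Sum>\<nu>\<in>{1..n}. sc (Am p \<mu> \<nu>)
                 (e \<nu> p + (\<Sum>b\<in>{n+1..n+r}. sc (conn_coeff sc pistar Dh n r e \<nu> p b) (e b p))))) \<and>
          (\<forall>a\<in>{n+1..n+r}. new_frame sc n r Am Amb Aab e a p =
              (\<Sum>b\<in>{n+1..n+r}. sc (Aab p a b) (e b p)))))
    \<and>
    (\<forall>Am Amb Aab.
       (\<forall>p\<in>V. nondegenerate {1..n} (Am p) \<and> nondegenerate {n+1..n+r} (Aab p)) \<and>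
       fibre_constant_on \<pi> V Am \<and> fibre_constant_on \<pi> V Aab \<and>
       (\<forall>p\<in>U. \<forall>\<mu>\<in>{1..n}. new_frame sc n r Am Amb Aab e \<mu> p =
              (\<Sum>\<nu>\<in>{1..n}. sc (Am p \<mu> \<nu>)
                 (e \<nu> p + (\<Sum>b\<in>{n+1..n+r}. sc (conn_coeff sc pistar Dh n r e \<nu> p b) (e b p))))) \<longrightarrow>
       (\<forall>p\<in>U.
          (\<forall>\<mu>\<in>{1..n}.
             adapted_frame pistar Dh n (new_frame sc n r Am Amb Aab e) \<mu> p =
               (\<Sum>\<nu>\<in>{1..n}. sc (Am p \<mu> \<nu>) (adapted_frame pistar Dh n e \<nu> p)) \<and>
             adapted_frame pistar Dh n (new_frame sc n r Am Amb Aab e) \<mu> p =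
               new_frame sc n r Am Amb Aab e \<mu> p) \<and>
          (\<forall>a\<in>{n+1..n+r}.
             adapted_frame pistar Dh n (new_frame sc n r Am Amb Aab e) a p =
               (\<Sum>b\<in>{n+1..n+r}. sc (Aab p a b) (adapted_frame pistar Dh n e b p)) \<and>
             adapted_frame pistar Dh n (new_frame sc n r Am Amb Aab e) a p =
               new_frame sc n r Am Amb Aab e a p)))"
proof -
  interpret framed_connection sc scM \<pi> pistar T Dv Dh TM n r V e
    using conn frame
    by (simp add: framed_connection_def connection_bundle_def framed_connection_axioms_def)
  have V: "p \<in> V" if "p \<in> U" for p using that UV by blast
  show ?thesis
    using V
    by (auto simp: normal_on_def new_frame_vertical adapted_frame_vertical adapted_new_frame
        adapted_frame_expansion normal_new_frame)
qed

end
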